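(* For every $f=\sum_{n\ge0}f_n\mathtt{x}^n\in\mathbb{K}[[\mathtt{x}]]$ and every $\sigma_{+}\in\mathfrak{M}^{+}$, the series $\sum_{n\ge0}f_n\sigma_{+}^{\circ n}$ converges in $\mathfrak{M}$.
   Context: $\mathbb{K}$ is a field of characteristic zero (discrete topology); $\mathbb{K}[[\mathtt{x}]]$ has the $(\mathtt{x})$-adic topology, given by the order valuation $\nu$ ($\nu(0)=+\infty$). $\mathfrak{M}:=\mathtt{x}\mathbb{K}[[\mathtt{x}]]$ (subspace topology) and $\mathfrak{M}^{+}:=\{\sigma\in\mathfrak{M}:\nu(\sigma)>1\}=\mathtt{x}^2\mathbb{K}[[\mathtt{x}]]$. For $g=\sum g_n\mathtt{x}^n$ and $\sigma\in\mathfrak{M}$, $g\circ\sigma:=\sum g_n\sigma^n$; $\sigma^{\circ0}:=\mathtt{x}$, $\sigma^{\circ n}:=\sigma\circ\cdots\circ\sigma$ ($n$ factors). *)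

theory Defs
  imports "HOL-Computational_Algebra.Formal_Power_Series"
begin

definition fpsM :: "'a::comm_ring_1 fps set" where
  "fpsM = {s. fps_nth s 0 = 0}"

definition fpsMplus :: "'a::comm_ring_1 fps set" where
  "fpsMplus = {s. fps_nth s 0 = 0 \<and> fps_nth s 1 = 0}"

definition fps_iter :: "'a::comm_ring_1 fps \<Rightarrow> nat \<Rightarrow> 'a fps" where
  "fps_iter \<sigma> n = ((\<lambda>g. fps_compose \<sigma> g) ^^ n) fps_X"

end

theory Submission
  imports Defs
begin

text \<open>Composing with a series of order at least 2 at least doubles the order, so the
  n-th compositional iterate of such a series has order at least 2^n > n. Hence each
  coefficient of the series receives contributions from finitely many terms only, which
  is convergence in the (x)-adic topology.\<close>

unbundle fps_syntax

lemma fps_power_nth_eq_0: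
  fixes g :: "'a::comm_ring_1 fps"
  assumes "\<And>j. j < m \<Longrightarrow> g $ j = 0" and "k < i * m"
  shows "(g ^ i) $ k = 0"
proof (cases "g = 0")
  case True
  moreover from assms(2) have "i \<noteq> 0" by (intro notI) simp
  ultimately show ?thesis by (simp add: zero_power)
next
  case False
  with assms(1) have "m \<le> subdegree g" by (intro subdegree_geI) auto
  with assms(2) have "k < i * subdegree g"
    by (meson less_le_trans mult_le_mono2)
  then show ?thesis by (rule fps_pow_nth_below_subdegree)
qed

lemma fps_compose_nth_eq_0:
  fixes a b :: "'a::comm_ring_1 fps"
  assumes a: "\<And>i. i < d \<Longrightarrow> a $ i = 0" and b: "\<And>j. j < m \<Longrightarrow> b $ j = 0"
    and "k < d * m"
  shows "(a oo b) $ k = 0"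
proof -
  have "a $ i * (b ^ i $ k) = 0" for i
  proof (cases "i < d")
    case False
    then have "k < i * m"
      using \<open>k < d * m\<close> by (meson less_le_trans mult_le_mono1 not_less)
    then have "b ^ i $ k = 0" by (metis b fps_power_nth_eq_0)
    then show ?thesis by simp
  qed (simp add: a)
  then show ?thesis by (simp add: fps_compose_nth)
qed

lemma fps_iter_nth_eq_0:
  fixes \<sigma> :: "'a::comm_ring_1 fps"
  assumes "\<sigma> \<in> fpsMplus" and "k < 2 ^ n"
  shows "fps_iter \<sigma> n $ k = 0"
  using assms(2)
proof (induction n arbitrary: k)
  case 0
  then show ?case by (simp add: fps_iter_def)
next
  case (Suc n)
  have "\<sigma> $ i = 0" if "i < 2" for i
    using assms(1) that by (auto simp: fpsMplus_def less_2_cases_iff)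
  then have "(\<sigma> oo fps_iter \<sigma> n) $ k = 0"
    using Suc by (intro fps_compose_nth_eq_0[where d = 2 and m = "2 ^ n"]) auto
  then show ?case by (simp add: fps_iter_def)
qed

lemma fps_sums_coefficientwise:
  fixes a :: "nat \<Rightarrow> 'a::comm_ring_1 fps"
  assumes "\<And>n k. k < n \<Longrightarrow> a n $ k = 0"
  shows "a sums Abs_fps (\<lambda>k. \<Sum>n\<le>k. a n $ k)"
  unfolding sums_def
proof (rule tendsto_fpsI)
  fix k
  have "(\<Sum>n<N. a n) $ k = (\<Sum>n\<le>k. a n $ k)" if "k < N" for N
  proof -
    have "(\<Sum>n<N. a n) $ k = (\<Sum>n<N. a n $ k)"
      by (simp add: fps_sum_nth)
    also have "\<dots> = (\<Sum>n\<le>k. a n $ k)"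
      using that assms by (intro sum.mono_neutral_right) auto
    finally show ?thesis .
  qed
  then show "\<forall>\<^sub>F N in sequentially. (\<Sum>n<N. a n) $ k = Abs_fps (\<lambda>k. \<Sum>n\<le>k. a n $ k) $ k"
    by (auto simp: eventually_sequentially intro: exI[of _ "Suc k"])
qed

theorem mainTheorem8:
  fixes f \<sigma> :: "'a::field_char_0 fps"
  assumes "\<sigma> \<in> fpsMplus"
  shows "\<exists>L \<in> fpsM. (\<lambda>n. fps_const (fps_nth f n) * fps_iter \<sigma> n) sums L"
proof -
  define a where "a n = fps_const (f $ n) * fps_iter \<sigma> n" for n
  have "a n $ k = 0" if "k < n" for n k
    using fps_iter_nth_eq_0[OF assms] less_trans[OF that less_exp] by (simp add: a_def)
  then have "a sums Abs_fps (\<lambda>k. \<Sum>n\<le>k. a n $ k)"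
    by (rule fps_sums_coefficientwise)
  moreover have "Abs_fps (\<lambda>k. \<Sum>n\<le>k. a n $ k) \<in> fpsM"
    by (simp add: fpsM_def a_def fps_iter_def)
  ultimately show ?thesis
    unfolding a_def by blast
qed

end
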